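(* Let $(X,\mathcal{U})$ be a sequentially complete separated uniform space, with $\mathcal{F}$ and $\mathcal{V}$ as in the context, and let $T:X\to X$ be a Ćirić-contraction. Then for each $x\in X$ the sequence $\{T^nx\}$ converges to a fixed point of $T$. Moreover, if the functions $a_2$ and $a_3$ in the contractive condition coincide on $X\times X$, then the fixed point is unique, i.e. there is a unique fixed point $x^*$ of $T$ and $\{T^nx\}$ converges to $x^*$ for every $x\in X$.
   Context: A uniform space $(X,\mathcal{U})$ is a nonempty set $X$ with a uniformity $\mathcal{U}$ on $X$. For $U,V\subseteq X\times X$, $\Delta(X)=\{(x,x):x\in X\}$ and $U\circ V=\{(x,y):\exists z\in X,\ (x,z)\in V,\ (z,y)\in U\}$. $X$ is separated if $\bigcap\mathcal{U}=\Delta(X)$. A sequence $\{x_n\}$ converges to $x$ if for every $U\in\mathcal{U}$ there is $N$ with $(x_n,x)\in U$ for $n\ge N$; it is Cauchy if for every $U\in\mathcal{U}$ there is $N$ with $(x_m,x_n)\in U$ for $m,n\ge N$; $X$ is sequentially complete if every Cauchy sequence converges. $\mathcal{F}$ is a nonempty collection of (uniformly continuous) pseudometrics on $X$ generating $\mathcal{U}$, and $\mathcal{V}$ is the family of all sets $V=\bigcap_{i=1}^m\{(x,y)\in X\times X:\rho_i(x,y)<r_i\}$ with $m\ge1$, $\rho_i\in\mathcal{F}$, $r_i>0$; $\mathcal{V}$ is a base for $\mathcal{U}$. For such $V$ and $\beta>0$, $\beta V=\bigcap_{i=1}^m\{(x,y):\rho_i(x,y)<\beta r_i\}$. A map $T:X\to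 X$ is a Ćirić-contraction if there are positive-valued functions $a_1,a_2,a_3,a_4$ on $X\times X$ with $\sup\{a_1(x,y)+a_2(x,y)+a_3(x,y)+2a_4(x,y):x,y\in X\}<1$ such that for all $x,y\in X$ and all $V_1,\dots,V_5\in\mathcal{V}$: if $(x,y)\in V_1$, $(x,Tx)\in V_2$, $(y,Ty)\in V_3$, $(x,Ty)\in V_4$, $(y,Tx)\in V_5$, then $(Tx,Ty)\in a_1(x,y)V_1\circ a_2(x,y)V_2\circ a_3(x,y)V_3\circ a_4(x,y)V_4\circ a_4(x,y)V_5$. *)

theory Defs
  imports Complex_Main "HOL-Library.FuncSet"
begin

definition pseudometric_on :: "'a set \<Rightarrow> ('a \<Rightarrow> 'a \<Rightarrow> real) \<Rightarrow> bool" where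
  "pseudometric_on X \<rho> \<longleftrightarrow>
     (\<forall>x\<in>X. \<forall>y\<in>X. \<rho> x y \<ge> 0 \<and> \<rho> x y = \<rho> y x) \<and>
     (\<forall>x\<in>X. \<rho> x x = 0) \<and>
     (\<forall>x\<in>X. \<forall>y\<in>X. \<forall>z\<in>X. \<rho> x z \<le> \<rho> x y + \<rho> y z)"

text \<open>A basic entourage V = \<Inter>_i {(x,y). \<rho>_i x y < r_i} is represented by the
(nonempty) list of its data (\<rho>_i, r_i).\<close>

definition valid_data :: "('a \<Rightarrow> 'a \<Rightarrow> real) set \<Rightarrow> (('a \<Rightarrow> 'a \<Rightarrow> real) \<times> real) list \<Rightarrow> bool" where
  "valid_data F ps \<longleftrightarrow> ps \<noteq> [] \<and> (\<forall>(\<rho>, r) \<in> set ps. \<rho> \<in> F \<and> r > 0)"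

definition ent :: "'a set \<Rightarrow> (('a \<Rightarrow> 'a \<Rightarrow> real) \<times> real) list \<Rightarrow> ('a \<times> 'a) set" where
  "ent X ps = {(x, y). x \<in> X \<and> y \<in> X \<and> (\<forall>(\<rho>, r) \<in> set ps. \<rho> x y < r)}"

definition scale_data :: "real \<Rightarrow> (('a \<Rightarrow> 'a \<Rightarrow> real) \<times> real) list \<Rightarrow> (('a \<Rightarrow> 'a \<Rightarrow> real) \<times> real) list" where
  "scale_data \<beta> ps = map (\<lambda>(\<rho>, r). (\<rho>, \<beta> * r)) ps"

definition base_ents :: "'a set \<Rightarrow> ('a \<Rightarrow> 'a \<Rightarrow> real) set \<Rightarrow> ('a \<times> 'a) set set" where
  "base_ents X F = {ent X ps | ps. valid_data F ps}"

definition unif :: "'a set \<Rightarrow> ('a \<Rightarrow> 'a \<Rightarrow> real) set \<Rightarrow> ('a \<times> 'a) set set" where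
  "unif X F = {U. U \<subseteq> X \<times> X \<and> (\<exists>V \<in> base_ents X F. V \<subseteq> U)}"

definition ucomp :: "'a set \<Rightarrow> ('a \<times> 'a) set \<Rightarrow> ('a \<times> 'a) set \<Rightarrow> ('a \<times> 'a) set" where
  "ucomp X U V = {(x, y). \<exists>z\<in>X. (x, z) \<in> V \<and> (z, y) \<in> U}"

definition separated :: "'a set \<Rightarrow> ('a \<Rightarrow> 'a \<Rightarrow> real) set \<Rightarrow> bool" where
  "separated X F \<longleftrightarrow> \<Inter> (unif X F) = Id_on X"

definition uconverges :: "'a set \<Rightarrow> ('a \<Rightarrow> 'a \<Rightarrow> real) set \<Rightarrow> (nat \<Rightarrow> 'a) \<Rightarrow> 'a \<Rightarrow> bool" where
  "uconverges X F s x \<longleftrightarrow> (\<forall>U \<in> unif X F. \<exists>N. \<forall>n\<ge>N. (s n, x) \<in> U)"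

definition ucauchy :: "'a set \<Rightarrow> ('a \<Rightarrow> 'a \<Rightarrow> real) set \<Rightarrow> (nat \<Rightarrow> 'a) \<Rightarrow> bool" where
  "ucauchy X F s \<longleftrightarrow> (\<forall>U \<in> unif X F. \<exists>N. \<forall>m\<ge>N. \<forall>n\<ge>N. (s m, s n) \<in> U)"

definition seq_complete :: "'a set \<Rightarrow> ('a \<Rightarrow> 'a \<Rightarrow> real) set \<Rightarrow> bool" where
  "seq_complete X F \<longleftrightarrow>
     (\<forall>s. (\<forall>n. s n \<in> X) \<and> ucauchy X F s \<longrightarrow> (\<exists>x\<in>X. uconverges X F s x))"

text \<open>Ciric-contraction with given positive functions a1..a4.
 sup (a1+a2+a3+2a4) < 1 is expressed as: bounded by some k < 1.
 The condition is required for every representation of V1..V5 \<in> \<V>.\<close>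
definition ciric_contraction ::
  "'a set \<Rightarrow> ('a \<Rightarrow> 'a \<Rightarrow> real) set \<Rightarrow> ('a \<Rightarrow> 'a) \<Rightarrow>
   ('a \<Rightarrow> 'a \<Rightarrow> real) \<Rightarrow> ('a \<Rightarrow> 'a \<Rightarrow> real) \<Rightarrow> ('a \<Rightarrow> 'a \<Rightarrow> real) \<Rightarrow> ('a \<Rightarrow> 'a \<Rightarrow> real) \<Rightarrow> bool" where
  "ciric_contraction X F T a1 a2 a3 a4 \<longleftrightarrow>
     T \<in> X \<rightarrow> X \<and>
     (\<forall>x\<in>X. \<forall>y\<in>X. a1 x y > 0 \<and> a2 x y > 0 \<and> a3 x y > 0 \<and> a4 x y > 0) \<and>
     (\<exists>k<1. \<forall>x\<in>X. \<forall>y\<in>X. a1 x y + a2 x y + a3 x y + 2 * a4 x y \<le> k) \<and>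
     (\<forall>x\<in>X. \<forall>y\<in>X. \<forall>p1 p2 p3 p4 p5.
        valid_data F p1 \<and> valid_data F p2 \<and> valid_data F p3 \<and> valid_data F p4 \<and> valid_data F p5 \<and>
        (x, y) \<in> ent X p1 \<and> (x, T x) \<in> ent X p2 \<and> (y, T y) \<in> ent X p3 \<and>
        (x, T y) \<in> ent X p4 \<and> (y, T x) \<in> ent X p5 \<longrightarrow>
        (T x, T y) \<in>
          ucomp X (ent X (scale_data (a1 x y) p1))
           (ucomp X (ent X (scale_data (a2 x y) p2))
             (ucomp X (ent X (scale_data (a3 x y) p3))
               (ucomp X (ent X (scale_data (a4 x y) p4))
                 (ent X (scale_data (a4 x y) p5))))))"

end

theory Submission
  imports Defs
begin

text \<open>Testing the uniform contractive condition on entourages of a single pseudometric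
  \<rho> \<in> F, with radii slightly above the actual distances, yields Ciric's metric inequality
  \<rho>(Tx,Ty) \<le> a1 \<rho>(x,y) + a2 \<rho>(x,Tx) + a3 \<rho>(y,Ty) + a4 (\<rho>(x,Ty) + \<rho>(y,Tx)) for every \<rho>.
  Taking y = Tx shows that consecutive steps of an orbit shrink by the factor k < 1, so the orbit
  is \<rho>-Cauchy for every \<rho> and hence Cauchy in the uniformity. For its limit p the same inequality
  gives (1 - k) \<rho>(p,Tp) \<le> 2 (\<rho>(u,p) + \<rho>(p,Tu)) for every orbit point u, so \<rho>(p,Tp) = 0
  for all \<rho> and separation forces Tp = p.\<close>

lemma ent_singleton_iff:
  "(u, v) \<in> ent X [(\<rho>, r)] \<longleftrightarrow> u \<in> X \<and> v \<in> X \<and> \<rho> u v < r"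
  by (simp add: ent_def)

lemma scale_data_singleton [simp]: "scale_data \<beta> [(\<rho>, r)] = [(\<rho>, \<beta> * r)]"
  by (simp add: scale_data_def)

lemma ent_singleton_in_unif:
  assumes "\<rho> \<in> F" and "r > 0"
  shows "ent X [(\<rho>, r)] \<in> unif X F"
proof -
  have "ent X [(\<rho>, r)] \<in> base_ents X F"
    using assms unfolding base_ents_def valid_data_def by auto
  moreover have "ent X [(\<rho>, r)] \<subseteq> X \<times> X"
    unfolding ent_def by auto
  ultimately show ?thesis
    unfolding unif_def by blast
qed

lemma pseudometric_on_triangle:
  "pseudometric_on X \<rho> \<Longrightarrow> x \<in> X \<Longrightarrow> y \<in> X \<Longrightarrow> z \<in> X \<Longrightarrow> \<rho> x z \<le> \<rho> x y + \<rho> y z"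
  unfolding pseudometric_on_def by blast

lemma ucomp_ent_singleton_subset:
  assumes "pseudometric_on X \<rho>" and "V \<subseteq> ent X [(\<rho>, s)]"
  shows "ucomp X (ent X [(\<rho>, r)]) V \<subseteq> ent X [(\<rho>, r + s)]"
proof
  fix w assume "w \<in> ucomp X (ent X [(\<rho>, r)]) V"
  then obtain u v z where w: "w = (u, v)" and "(u, z) \<in> V" and zv: "(z, v) \<in> ent X [(\<rho>, r)]"
    unfolding ucomp_def by blast
  with assms(2) have uz: "(u, z) \<in> ent X [(\<rho>, s)]" by blast
  have "\<rho> u v \<le> \<rho> u z + \<rho> z v"
    using uz zv pseudometric_on_triangle[OF assms(1)] unfolding ent_singleton_iff by blast
  with uz zv show "w \<in> ent X [(\<rho>, r + s)]"
    unfolding w ent_singleton_iff by simp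
qed

lemma uconverges_imp_dist_less:
  assumes "uconverges X F s p" and "\<rho> \<in> F" and "e > 0"
  shows "\<exists>N. \<forall>n\<ge>N. \<rho> (s n) p < e"
proof -
  obtain N where "\<forall>n\<ge>N. (s n, p) \<in> ent X [(\<rho>, e)]"
    using assms(1) ent_singleton_in_unif[OF assms(2,3)] unfolding uconverges_def by blast
  then show ?thesis
    unfolding ent_singleton_iff by blast
qed

lemma ucauchyI:
  assumes in_X: "\<And>n. s n \<in> X"
    and cauchy: "\<And>\<rho> e. \<rho> \<in> F \<Longrightarrow> e > 0 \<Longrightarrow> \<exists>N. \<forall>m\<ge>N. \<forall>n\<ge>N. \<rho> (s m) (s n) < e"
  shows "ucauchy X F s"
  unfolding ucauchy_def
proof
  fix U assume "U \<in> unif X F"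
  then obtain ps where ps: "valid_data F ps" "ent X ps \<subseteq> U"
    unfolding unif_def base_ents_def by auto
  have "\<forall>\<^sub>F N in sequentially. \<forall>(\<rho>, r) \<in> set ps. \<forall>m\<ge>N. \<forall>n\<ge>N. \<rho> (s m) (s n) < r"
  proof (rule eventually_ball_finite, safe)
    fix \<rho> r assume "(\<rho>, r) \<in> set ps"
    with ps(1) cauchy obtain N where "\<forall>m\<ge>N. \<forall>n\<ge>N. \<rho> (s m) (s n) < r"
      unfolding valid_data_def by blast
    then show "\<forall>\<^sub>F N in sequentially. \<forall>m\<ge>N. \<forall>n\<ge>N. \<rho> (s m) (s n) < r"
      unfolding eventually_sequentially by (meson order.trans)
  qed
  then obtain N where "\<forall>m\<ge>N. \<forall>n\<ge>N. (s m, s n) \<in> ent X ps"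
    unfolding eventually_sequentially ent_def using in_X by fastforce
  then show "\<exists>N. \<forall>m\<ge>N. \<forall>n\<ge>N. (s m, s n) \<in> U"
    using ps(2) by blast
qed

lemma separated_eqI:
  assumes "separated X F" and "u \<in> X" and "v \<in> X" and "\<And>\<rho>. \<rho> \<in> F \<Longrightarrow> \<rho> u v = 0"
  shows "u = v"
proof -
  have "(u, v) \<in> U" if "U \<in> unif X F" for U
  proof -
    from that obtain ps where "valid_data F ps" "ent X ps \<subseteq> U"
      unfolding unif_def base_ents_def by auto
    moreover from this(1) have "(u, v) \<in> ent X ps"
      using assms(2-4) unfolding valid_data_def ent_def by fastforce
    ultimately show ?thesis by blast
  qed
  then have "(u, v) \<in> Id_on X"
    using assms(1) unfolding separated_def by blast
  then show ?thesis by blast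
qed

lemma ciric_contraction_dist_less:
  assumes contr: "ciric_contraction X F T a1 a2 a3 a4"
    and \<rho>: "\<rho> \<in> F" and pm: "pseudometric_on X \<rho>" and x: "x \<in> X" and y: "y \<in> X"
    and r: "\<rho> x y < r1" "\<rho> x (T x) < r2" "\<rho> y (T y) < r3" "\<rho> x (T y) < r4" "\<rho> y (T x) < r5"
  shows "\<rho> (T x) (T y) < a1 x y * r1 + a2 x y * r2 + a3 x y * r3 + a4 x y * (r4 + r5)"
proof -
  have Tx: "T x \<in> X" and Ty: "T y \<in> X"
    using contr x y unfolding ciric_contraction_def by auto
  have "0 \<le> \<rho> u v" if "u \<in> X" "v \<in> X" for u v
    using pm that unfolding pseudometric_on_def by blast
  then have valid: "valid_data F [(\<rho>, r)]" if "r \<in> {r1, r2, r3, r4, r5}" for r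
    using that \<rho> r x y Tx Ty unfolding valid_data_def by fastforce
  have "(T x, T y) \<in>
      ucomp X (ent X (scale_data (a1 x y) [(\<rho>, r1)])) (ucomp X (ent X (scale_data (a2 x y) [(\<rho>, r2)]))
        (ucomp X (ent X (scale_data (a3 x y) [(\<rho>, r3)])) (ucomp X (ent X (scale_data (a4 x y) [(\<rho>, r4)]))
          (ent X (scale_data (a4 x y) [(\<rho>, r5)])))))"
    by (rule contr[unfolded ciric_contraction_def, THEN conjunct2, THEN conjunct2, THEN conjunct2,
          rule_format]) (use x y Tx Ty r valid in \<open>auto simp: ent_singleton_iff\<close>)
  also have "\<dots> \<subseteq> ent X [(\<rho>, a1 x y * r1 + (a2 x y * r2 + (a3 x y * r3 + (a4 x y * r4 + a4 x y * r5))))]"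
    unfolding scale_data_singleton by (intro ucomp_ent_singleton_subset[OF pm] order_refl)
  finally show ?thesis
    unfolding ent_singleton_iff by (simp add: algebra_simps)
qed

lemma ciric_contraction_dist_le:
  assumes contr: "ciric_contraction X F T a1 a2 a3 a4"
    and \<rho>: "\<rho> \<in> F" and pm: "pseudometric_on X \<rho>" and x: "x \<in> X" and y: "y \<in> X"
  shows "\<rho> (T x) (T y) \<le> a1 x y * \<rho> x y + a2 x y * \<rho> x (T x) + a3 x y * \<rho> y (T y)
           + a4 x y * (\<rho> x (T y) + \<rho> y (T x))"
proof (rule field_le_epsilon)
  fix e :: real assume e: "0 < e"
  obtain k where "k < 1" and "a1 x y + a2 x y + a3 x y + 2 * a4 x y \<le> k"
    using contr x y unfolding ciric_contraction_def by blast
  moreover have "a1 x y > 0" "a2 x y > 0" "a3 x y > 0" "a4 x y > 0"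
    using contr x y unfolding ciric_contraction_def by auto
  ultimately have "(a1 x y + a2 x y + a3 x y + 2 * a4 x y) * e \<le> e"
    using e by (simp add: mult_left_le_one_le)
  moreover have "\<rho> (T x) (T y) < a1 x y * (\<rho> x y + e) + a2 x y * (\<rho> x (T x) + e)
      + a3 x y * (\<rho> y (T y) + e) + a4 x y * ((\<rho> x (T y) + e) + (\<rho> y (T x) + e))"
    using e by (intro ciric_contraction_dist_less[OF contr \<rho> pm x y]) auto
  ultimately show "\<rho> (T x) (T y) \<le> a1 x y * \<rho> x y + a2 x y * \<rho> x (T x) + a3 x y * \<rho> y (T y)
      + a4 x y * (\<rho> x (T y) + \<rho> y (T x)) + e"
    by (simp add: algebra_simps)
qed

lemma funpow_in: "T \<in> X \<rightarrow> X \<Longrightarrow> x \<in> X \<Longrightarrow> (T ^^ n) x \<in> X"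
  by (induction n) auto

lemma le_mult_if_le_affine:
  fixes q p b c k :: real
  assumes "q \<le> b * p + c * q" and "0 \<le> b" and "0 \<le> c" and "b + c \<le> k" and "k < 1" and "0 \<le> p"
  shows "q \<le> k * p"
proof -
  have "(1 - c) * q \<le> b * p"
    using assms(1) by (simp add: algebra_simps)
  also have "\<dots> \<le> (k - c) * p"
    using assms(4,6) by (intro mult_right_mono) auto
  also have "\<dots> \<le> (1 - c) * (k * p)"
  proof -
    have "k * p \<le> p"
      using mult_right_mono[of k 1 p] assms(5,6) by simp
    then have "c * (k * p) \<le> c * p"
      using assms(3) by (rule mult_left_mono)
    then show ?thesis by (simp add: algebra_simps)
  qed
  finally show ?thesis
    using assms(4,5,2) by (simp add: mult_le_cancel_left_pos)
qed

locale ciric_pseudometric =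
  fixes X :: "'a set" and \<rho> :: "'a \<Rightarrow> 'a \<Rightarrow> real" and T :: "'a \<Rightarrow> 'a"
    and a1 a2 a3 a4 :: "'a \<Rightarrow> 'a \<Rightarrow> real" and k :: real
  assumes pseudometric: "pseudometric_on X \<rho>"
    and maps_to: "\<And>x. x \<in> X \<Longrightarrow> T x \<in> X"
    and coeffs_nonneg:
      "\<And>x y. x \<in> X \<Longrightarrow> y \<in> X \<Longrightarrow> 0 \<le> a1 x y \<and> 0 \<le> a2 x y \<and> 0 \<le> a3 x y \<and> 0 \<le> a4 x y"
    and coeffs_sum_le: "\<And>x y. x \<in> X \<Longrightarrow> y \<in> X \<Longrightarrow> a1 x y + a2 x y + a3 x y + 2 * a4 x y \<le> k"
    and k_nonneg: "0 \<le> k" and k_less_1: "k < 1"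
    and dist_le: "\<And>x y. x \<in> X \<Longrightarrow> y \<in> X \<Longrightarrow>
      \<rho> (T x) (T y) \<le> a1 x y * \<rho> x y + a2 x y * \<rho> x (T x) + a3 x y * \<rho> y (T y)
        + a4 x y * (\<rho> x (T y) + \<rho> y (T x))"
begin

lemma dist_nonneg: "x \<in> X \<Longrightarrow> y \<in> X \<Longrightarrow> 0 \<le> \<rho> x y"
  using pseudometric unfolding pseudometric_on_def by blast

lemma dist_commute: "x \<in> X \<Longrightarrow> y \<in> X \<Longrightarrow> \<rho> x y = \<rho> y x"
  using pseudometric unfolding pseudometric_on_def by blast

lemma dist_self: "x \<in> X \<Longrightarrow> \<rho> x x = 0"
  using pseudometric unfolding pseudometric_on_def by blast

lemmas dist_triangle = pseudometric_on_triangle[OF pseudometric]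

lemma iterate_in: "x \<in> X \<Longrightarrow> (T ^^ n) x \<in> X"
  by (rule funpow_in) (auto simp: maps_to)

lemma dist_step_le: "x \<in> X \<Longrightarrow> \<rho> (T x) (T (T x)) \<le> k * \<rho> x (T x)"
proof -
  assume x: "x \<in> X"
  then have Tx: "T x \<in> X" and TTx: "T (T x) \<in> X" by (auto simp: maps_to)
  note a = coeffs_nonneg[OF x Tx]
  have "\<rho> (T x) (T (T x)) \<le> a1 x (T x) * \<rho> x (T x) + a2 x (T x) * \<rho> x (T x)
      + a3 x (T x) * \<rho> (T x) (T (T x)) + a4 x (T x) * \<rho> x (T (T x))"
    using dist_le[OF x Tx] dist_self[OF Tx] by simp
  also have "\<dots> \<le> (a1 x (T x) + a2 x (T x) + a4 x (T x)) * \<rho> x (T x)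
      + (a3 x (T x) + a4 x (T x)) * \<rho> (T x) (T (T x))"
    using mult_left_mono[OF dist_triangle[OF x Tx TTx], of "a4 x (T x)"] a
    by (simp add: algebra_simps)
  finally show ?thesis
    by (rule le_mult_if_le_affine) (use a coeffs_sum_le[OF x Tx] k_less_1 dist_nonneg[OF x Tx] in auto)
qed

lemma dist_iterate_step_le: "x \<in> X \<Longrightarrow> \<rho> ((T ^^ n) x) ((T ^^ Suc n) x) \<le> k ^ n * \<rho> x (T x)"
proof (induction n)
  case (Suc n)
  have "\<rho> ((T ^^ Suc n) x) ((T ^^ Suc (Suc n)) x) \<le> k * \<rho> ((T ^^ n) x) ((T ^^ Suc n) x)"
    using dist_step_le[OF iterate_in[OF Suc.prems]] by simp
  also have "\<dots> \<le> k * (k ^ n * \<rho> x (T x))"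
    using Suc k_nonneg by (simp add: mult_left_mono)
  finally show ?case by simp
qed simp

lemma dist_iterates_add_le:
  assumes x: "x \<in> X"
  shows "\<rho> ((T ^^ m) x) ((T ^^ (m + j)) x) \<le> \<rho> x (T x) * k ^ m * (1 - k ^ j) / (1 - k)"
proof (induction j)
  case 0 then show ?case using dist_self[OF iterate_in[OF x]] by simp
next
  case (Suc j)
  have "\<rho> ((T ^^ m) x) ((T ^^ (m + Suc j)) x)
      \<le> \<rho> ((T ^^ m) x) ((T ^^ (m + j)) x) + \<rho> ((T ^^ (m + j)) x) ((T ^^ Suc (m + j)) x)"
    using dist_triangle[OF iterate_in[OF x] iterate_in[OF x] iterate_in[OF x, of "Suc (m + j)"]]
    by simp
  also have "\<dots> \<le> \<rho> x (T x) * k ^ m * (1 - k ^ j) / (1 - k) + k ^ (m + j) * \<rho> x (T x)"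
    using Suc dist_iterate_step_le[OF x, of "m + j"] by linarith
  also have "\<dots> = \<rho> x (T x) * k ^ m * (1 - k ^ Suc j) / (1 - k)"
    using k_less_1 by (simp add: field_simps power_add)
  finally show ?case .
qed

lemma dist_iterates_le:
  assumes x: "x \<in> X" and "m \<le> n"
  shows "\<rho> ((T ^^ m) x) ((T ^^ n) x) \<le> \<rho> x (T x) * k ^ m / (1 - k)"
proof -
  obtain j where n: "n = m + j" using \<open>m \<le> n\<close> le_Suc_ex by blast
  have "0 \<le> \<rho> x (T x) * k ^ m"
    using dist_nonneg[OF x maps_to[OF x]] k_nonneg by simp
  then have "\<rho> x (T x) * k ^ m * (1 - k ^ j) \<le> \<rho> x (T x) * k ^ m"
    using k_nonneg by (simp add: mult_left_le)
  then show ?thesis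
    using dist_iterates_add_le[OF x, of m j] k_less_1 unfolding n
    by (smt (verit) divide_right_mono)
qed

lemma iterates_cauchy:
  assumes x: "x \<in> X" and e: "0 < e"
  shows "\<exists>N. \<forall>m\<ge>N. \<forall>n\<ge>N. \<rho> ((T ^^ m) x) ((T ^^ n) x) < e"
proof -
  have "(\<lambda>n. \<rho> x (T x) * k ^ n / (1 - k)) \<longlonglongrightarrow> \<rho> x (T x) * 0 / (1 - k)"
    using k_nonneg k_less_1 by (intro tendsto_intros) auto
  then have "\<forall>\<^sub>F n in sequentially. \<rho> x (T x) * k ^ n / (1 - k) < e"
    using e by (simp add: order_tendstoD(2))
  then obtain N where N: "\<And>n. n \<ge> N \<Longrightarrow> \<rho> x (T x) * k ^ n / (1 - k) < e"
    unfolding eventually_sequentially by blast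
  have "\<rho> ((T ^^ m) x) ((T ^^ n) x) < e" if "m \<ge> N" "n \<ge> N" "m \<le> n" for m n
    using dist_iterates_le[OF x that(3)] N[OF that(1)] by simp
  then show ?thesis
    using dist_commute[OF iterate_in[OF x] iterate_in[OF x]] by (metis nle_le)
qed

lemma dist_fixed_le:
  assumes u: "u \<in> X" and p: "p \<in> X"
  shows "(1 - k) * \<rho> p (T p) \<le> 2 * (\<rho> u p + \<rho> p (T u))"
proof -
  have Tu: "T u \<in> X" and Tp: "T p \<in> X" using u p maps_to by auto
  note a = coeffs_nonneg[OF u p] and sum = coeffs_sum_le[OF u p]
  have "\<rho> p (T p) \<le> \<rho> p (T u) + \<rho> (T u) (T p)"
    using dist_triangle[OF p Tu Tp] .
  also have "\<rho> (T u) (T p) \<le> a1 u p * \<rho> u p + a2 u p * (\<rho> u p + \<rho> p (T u)) + a3 u p * \<rho> p (T p)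
      + a4 u p * (\<rho> u p + \<rho> p (T p) + \<rho> p (T u))"
    using dist_le[OF u p] a
      mult_left_mono[OF dist_triangle[OF u p Tu], of "a2 u p"]
      mult_left_mono[OF dist_triangle[OF u p Tp], of "a4 u p"]
    by (simp add: algebra_simps dist_commute[OF Tu p])
  finally have "(1 - a3 u p - a4 u p) * \<rho> p (T p)
      \<le> \<rho> p (T u) + (a1 u p + a2 u p + a4 u p) * (\<rho> u p + \<rho> p (T u))"
    using mult_nonneg_nonneg[OF conjunct1[OF a] dist_nonneg[OF p Tu]] by (simp add: algebra_simps)
  moreover have "(1 - k) * \<rho> p (T p) \<le> (1 - a3 u p - a4 u p) * \<rho> p (T p)"
    using a sum dist_nonneg[OF p Tp] by (intro mult_right_mono) auto
  moreover have "(a1 u p + a2 u p + a4 u p) * (\<rho> u p + \<rho> p (T u)) \<le> \<rho> u p + \<rho> p (T u)"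
    using a sum k_less_1 dist_nonneg[OF u p] dist_nonneg[OF p Tu]
    by (intro mult_left_le_one_le) auto
  ultimately show ?thesis
    using dist_nonneg[OF u p] dist_nonneg[OF p Tu] by (smt (verit))
qed

lemma limit_of_iterates_fixed:
  assumes x: "x \<in> X" and p: "p \<in> X"
    and lim: "\<And>e. 0 < e \<Longrightarrow> \<exists>N. \<forall>n\<ge>N. \<rho> ((T ^^ n) x) p < e"
  shows "\<rho> p (T p) = 0"
proof -
  have "(1 - k) * \<rho> p (T p) \<le> 0 + e" if e: "0 < e" for e
  proof -
    obtain N where N: "\<And>n. n \<ge> N \<Longrightarrow> \<rho> ((T ^^ n) x) p < e / 4"
      using lim[of "e / 4"] e by auto
    have "\<rho> p (T ((T ^^ N) x)) < e / 4"
      using N[of "Suc N"] dist_commute[OF p iterate_in[OF x, of "Suc N"]] by simp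
    then show ?thesis
      using dist_fixed_le[OF iterate_in[OF x, of N] p] N[of N] by simp
  qed
  then have "(1 - k) * \<rho> p (T p) \<le> 0"
    by (rule field_le_epsilon)
  then show ?thesis
    using k_less_1 dist_nonneg[OF p maps_to[OF p]] by (simp add: mult_le_0_iff)
qed

lemma fixed_points_dist_zero:
  assumes p: "p \<in> X" "T p = p" and q: "q \<in> X" "T q = q"
  shows "\<rho> p q = 0"
proof -
  note a = coeffs_nonneg[OF p(1) q(1)]
  have "\<rho> p q \<le> 0 * 0 + (a1 p q + 2 * a4 p q) * \<rho> p q"
    using dist_le[OF p(1) q(1)] p q dist_self dist_commute[OF p(1) q(1)] by (simp add: algebra_simps)
  then have "\<rho> p q \<le> k * 0"
    by (rule le_mult_if_le_affine) (use a coeffs_sum_le[OF p(1) q(1)] k_less_1 in auto)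
  then show ?thesis
    using dist_nonneg[OF p(1) q(1)] by simp
qed

end

lemma ciric_contraction_imp_ciric_pseudometric:
  assumes contr: "ciric_contraction X F T a1 a2 a3 a4" and "X \<noteq> {}"
    and pm: "\<forall>\<rho>\<in>F. pseudometric_on X \<rho>"
  obtains k where "\<And>\<rho>. \<rho> \<in> F \<Longrightarrow> ciric_pseudometric X \<rho> T a1 a2 a3 a4 k"
proof -
  obtain k where k: "k < 1" and sum: "\<forall>x\<in>X. \<forall>y\<in>X. a1 x y + a2 x y + a3 x y + 2 * a4 x y \<le> k"
    using contr unfolding ciric_contraction_def by blast
  have pos: "\<forall>x\<in>X. \<forall>y\<in>X. 0 < a1 x y \<and> 0 < a2 x y \<and> 0 < a3 x y \<and> 0 < a4 x y"
    and maps_to: "T \<in> X \<rightarrow> X"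
    using contr unfolding ciric_contraction_def by blast+
  obtain x where x: "x \<in> X" using assms(2) by blast
  have "0 < a1 x x \<and> 0 < a2 x x \<and> 0 < a3 x x \<and> 0 < a4 x x"
    and "a1 x x + a2 x x + a3 x x + 2 * a4 x x \<le> k"
    using pos sum x by blast+
  then have "0 \<le> k" by linarith
  show thesis
  proof (rule that, unfold_locales)
    fix \<rho> x y assume "\<rho> \<in> F" "x \<in> X" "y \<in> X"
    with pm show "\<rho> (T x) (T y) \<le> a1 x y * \<rho> x y + a2 x y * \<rho> x (T x) + a3 x y * \<rho> y (T y)
        + a4 x y * (\<rho> x (T y) + \<rho> y (T x))"
      by (intro ciric_contraction_dist_le[OF contr]) auto
  next
    fix x y assume "x \<in> X" "y \<in> X"
    then show "0 \<le> a1 x y \<and> 0 \<le> a2 x y \<and> 0 \<le> a3 x y \<and> 0 \<le> a4 x y"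
      using pos by (simp add: less_imp_le)
  qed (use k sum maps_to pm \<open>0 \<le> k\<close> in \<open>simp_all add: funcset_mem\<close>)
qed

theorem ciric_contraction_iterates_converge_to_fixed_point:
  assumes pm: "\<forall>\<rho>\<in>F. pseudometric_on X \<rho>" and sep: "separated X F" and complete: "seq_complete X F"
    and contr: "ciric_contraction X F T a1 a2 a3 a4" and x: "x \<in> X"
  shows "\<exists>p\<in>X. T p = p \<and> uconverges X F (\<lambda>n. (T ^^ n) x) p"
proof -
  obtain k where C: "\<And>\<rho>. \<rho> \<in> F \<Longrightarrow> ciric_pseudometric X \<rho> T a1 a2 a3 a4 k"
    using ciric_contraction_imp_ciric_pseudometric[OF contr _ pm] x by (metis empty_iff)
  have T_in: "T \<in> X \<rightarrow> X"
    using contr unfolding ciric_contraction_def by (elim conjE)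
  have "ucauchy X F (\<lambda>n. (T ^^ n) x)"
    using funpow_in[OF T_in x] ciric_pseudometric.iterates_cauchy[OF C x] by (rule ucauchyI)
  then obtain p where p: "p \<in> X" and conv: "uconverges X F (\<lambda>n. (T ^^ n) x) p"
    using complete[unfolded seq_complete_def, THEN spec[of _ "\<lambda>n. (T ^^ n) x"]] funpow_in[OF T_in x]
    by blast
  have "p = T p"
  proof (rule separated_eqI[OF sep p funcset_mem[OF T_in p]])
    fix \<rho> assume "\<rho> \<in> F"
    then show "\<rho> p (T p) = 0"
      by (rule ciric_pseudometric.limit_of_iterates_fixed[OF C x p])
        (rule uconverges_imp_dist_less[OF conv \<open>\<rho> \<in> F\<close>])
  qed
  with p conv show ?thesis by metis
qed

theorem ciric_contraction_fixed_point_unique: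
  assumes pm: "\<forall>\<rho>\<in>F. pseudometric_on X \<rho>" and sep: "separated X F"
    and contr: "ciric_contraction X F T a1 a2 a3 a4"
    and p: "p \<in> X" "T p = p" and q: "q \<in> X" "T q = q"
  shows "p = q"
proof -
  obtain k where C: "\<And>\<rho>. \<rho> \<in> F \<Longrightarrow> ciric_pseudometric X \<rho> T a1 a2 a3 a4 k"
    using ciric_contraction_imp_ciric_pseudometric[OF contr _ pm] p(1) by (metis empty_iff)
  show ?thesis
    using separated_eqI[OF sep p(1) q(1)] ciric_pseudometric.fixed_points_dist_zero[OF C p q] by blast
qed

theorem corollary1:
  fixes X :: "'a set" and F :: "('a \<Rightarrow> 'a \<Rightarrow> real) set" and T :: "'a \<Rightarrow> 'a"
    and a1 a2 a3 a4 :: "'a \<Rightarrow> 'a \<Rightarrow> real"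
  assumes "X \<noteq> {}" and "F \<noteq> {}" and "\<forall>\<rho>\<in>F. pseudometric_on X \<rho>"
    and "separated X F" and "seq_complete X F"
    and "ciric_contraction X F T a1 a2 a3 a4"
  shows "(\<forall>x\<in>X. \<exists>p\<in>X. T p = p \<and> uconverges X F (\<lambda>n. (T ^^ n) x) p)
       \<and> ((\<forall>x\<in>X. \<forall>y\<in>X. a2 x y = a3 x y) \<longrightarrow>
          (\<exists>!p. p \<in> X \<and> T p = p) \<and>
          (\<exists>p\<in>X. T p = p \<and> (\<forall>x\<in>X. uconverges X F (\<lambda>n. (T ^^ n) x) p)))"
proof -
  have converge: "\<forall>x\<in>X. \<exists>p\<in>X. T p = p \<and> uconverges X F (\<lambda>n. (T ^^ n) x) p"
    using ciric_contraction_iterates_converge_to_fixed_point[OF assms(3-6)] by blast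
  have unique: "\<And>p q. p \<in> X \<Longrightarrow> T p = p \<Longrightarrow> q \<in> X \<Longrightarrow> T q = q \<Longrightarrow> p = q"
    using ciric_contraction_fixed_point_unique[OF assms(3,4,6)] by blast
  obtain x where "x \<in> X" using assms(1) by blast
  with converge obtain p where p: "p \<in> X" "T p = p" by blast
  have "\<forall>x\<in>X. uconverges X F (\<lambda>n. (T ^^ n) x) p"
  proof
    fix x assume "x \<in> X"
    with converge obtain q where "q \<in> X" "T q = q" "uconverges X F (\<lambda>n. (T ^^ n) x) q" by blast
    with unique[OF p] show "uconverges X F (\<lambda>n. (T ^^ n) x) p" by simp
  qed
  with p unique show ?thesis
    using converge by blast
qed

end
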